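(* Let $L>0$, let $n$ be a positive integer, $\Delta x = 2L/n$, and let $X_n=\{x_0,\dots,x_{n-1}\}$ with $x_i=-L+i\Delta x$. Let $k\ge 1$ and let $\omega_1,\dots,\omega_k$ be discrete measures on $\mathbb{R}$ of the form $\omega_\ell=\sum_i a_i^\ell\,\delta_{s_i^\ell}$ (finitely many atoms) with $a_i^\ell\ge 0$ and $-L\le s_i^\ell\le L-\Delta x$ for all $i,\ell$. Fix a constant $C\in[0,1]$ and define, for $\varepsilon>0$, $$\delta(\varepsilon)=C+\int_\varepsilon^\infty (1-e^{\varepsilon-s})\,(\omega_1*\cdots*\omega_k)(s)\,ds .$$ For each $\ell$ let $\omega_\ell^{\mathrm L}=\sum_i a_i^\ell\,\delta_{s_i^{\mathrm L,\ell}}$ and $\omega_\ell^{\mathrm R}=\sum_i a_i^\ell\,\delta_{s_i^{\mathrm R,\ell}}$, where $s_i^{\mathrm L,\ell}=\max\{x\in X_n: x\le s_i^\ell\}$ and $s_i^{\mathrm R,\ell}=\min\{x\in X_n: x\ge s_i^\ell\}$, and let $\delta^{\mathrm L}(\varepsilon)$, $\delta^{\mathrm R}(\varepsilon)$ be defined by the same formula (with the same constant $C$) with $\omega_\ell$ replaced by $\omega_\ell^{\mathrm L}$, resp. $\omega_\ell^{\mathrm R}$. Then for all $\varepsilon>0$, $$\delta^{\mathrm L}(\varepsilon)\le\delta(\varepsilon)\le\delta^{\mathrm R}(\varepsilon).$$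
   Context: $\delta_t$ denotes the Dirac point mass at $t$. The convolution of discrete measures is $\big(\sum_i a_i\delta_{t_i}\big)*\big(\sum_j b_j\delta_{u_j}\big)=\sum_{i,j}a_ib_j\,\delta_{t_i+u_j}$, and $\int_\varepsilon^\infty h(s)\,\mu(s)\,ds$ for a discrete measure $\mu=\sum_i c_i\delta_{t_i}$ means $\sum_{i:\,t_i\ge\varepsilon} c_i h(t_i)$. In the paper, $C=1-\prod_{\ell}(1-\delta_\ell(\infty))$ is the contribution of outcomes with infinite privacy loss, which is unaffected by the grid approximation. *)

theory Defs
  imports "HOL-Analysis.Analysis"
begin

text \<open>A discrete measure with finitely many atoms sum_i a_i delta_(s_i) is represented by
  the list of pairs (a_i, s_i).\<close>
type_synonym dmeasure = "(real \<times> real) list"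

definition dconv :: "dmeasure \<Rightarrow> dmeasure \<Rightarrow> dmeasure" where
  "dconv xs ys = [(a * b, t + u). (a, t) \<leftarrow> xs, (b, u) \<leftarrow> ys]"

definition dconv_all :: "dmeasure list \<Rightarrow> dmeasure" where
  "dconv_all ws = foldr dconv ws [(1, 0)]"

text \<open>delta(eps) = C + int_eps^infty (1 - e^(eps - s)) (omega_1 * ... * omega_k)(s) ds,
  the integral against a discrete measure being the sum over atoms t with t >= eps.\<close>
definition delta_fun :: "real \<Rightarrow> dmeasure list \<Rightarrow> real \<Rightarrow> real" where
  "delta_fun C ws \<epsilon> = C + sum_list [c * (1 - exp (\<epsilon> - t)). (c, t) \<leftarrow> dconv_all ws, \<epsilon> \<le> t]"

definition grid :: "real \<Rightarrow> nat \<Rightarrow> real set" where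
  "grid L n = {-L + real i * (2 * L / real n) | i. i < n}"

definition round_down :: "real \<Rightarrow> nat \<Rightarrow> real \<Rightarrow> real" where
  "round_down L n s = Max {x \<in> grid L n. x \<le> s}"

definition round_up :: "real \<Rightarrow> nat \<Rightarrow> real \<Rightarrow> real" where
  "round_up L n s = Min {x \<in> grid L n. s \<le> x}"

definition discretize_L :: "real \<Rightarrow> nat \<Rightarrow> dmeasure \<Rightarrow> dmeasure" where
  "discretize_L L n w = map (\<lambda>(a, s). (a, round_down L n s)) w"

definition discretize_R :: "real \<Rightarrow> nat \<Rightarrow> dmeasure \<Rightarrow> dmeasure" where
  "discretize_R L n w = map (\<lambda>(a, s). (a, round_up L n s)) w"

end

theory Submission
  imports Defs
begin

text \<open>Moving every atom of a measure to the left (right) can only decrease (increase) the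
  integrand of \<open>\<delta>\<close>, since t \<mapsto> max 0 (1 - exp (\<epsilon> - t)) is nondecreasing and the weights are
  nonnegative. Convolution preserves this atomwise order: the atoms of a convolution are the
  pairwise products of weights placed at the pairwise sums of locations. Rounding each atom down
  (up) to the grid is such a move, which gives both inequalities.\<close>

definition atom_le :: "real \<times> real \<Rightarrow> real \<times> real \<Rightarrow> bool" where
  "atom_le p q \<longleftrightarrow> fst p = fst q \<and> 0 \<le> fst p \<and> snd p \<le> snd q"

definition hockey_stick :: "real \<Rightarrow> real \<Rightarrow> real" where
  "hockey_stick \<epsilon> t = max 0 (1 - exp (\<epsilon> - t))"

lemma mono_hockey_stick: "mono (hockey_stick \<epsilon>)"
  unfolding hockey_stick_def by (intro monoI max.mono) auto

lemma hockey_stick_eq: "hockey_stick \<epsilon> t = (if \<epsilon> \<le> t then 1 - exp (\<epsilon> - t) else 0)"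
  by (simp add: hockey_stick_def)

lemma delta_fun_eq_sum_hockey_stick:
  "delta_fun C ws \<epsilon> = C + (\<Sum>(c, t)\<leftarrow>dconv_all ws. c * hockey_stick \<epsilon> t)"
proof -
  have "sum_list [c * (1 - exp (\<epsilon> - t)). (c, t) \<leftarrow> xs, \<epsilon> \<le> t]
        = (\<Sum>(c, t)\<leftarrow>xs. c * hockey_stick \<epsilon> t)" for xs
    by (induction xs) (auto simp: hockey_stick_eq)
  then show ?thesis
    by (simp add: delta_fun_def)
qed

lemma atom_le_weighted_hockey_stick:
  assumes "atom_le p q"
  shows "(\<lambda>(c, t). c * hockey_stick \<epsilon> t) p \<le> (\<lambda>(c, t). c * hockey_stick \<epsilon> t) q"
  using assms mono_hockey_stick[of \<epsilon>]
  by (cases p; cases q) (auto simp: atom_le_def intro: mult_left_mono dest: monoD)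

lemma atom_le_conv:
  assumes "atom_le p q" and "atom_le p' q'"
  shows "atom_le (fst p * fst p', snd p + snd p') (fst q * fst q', snd q + snd q')"
  using assms by (simp add: atom_le_def)

lemma dconv_Cons:
  "dconv ((a, t) # xs) ys = map (\<lambda>(b, u). (a * b, t + u)) ys @ dconv xs ys"
  by (simp add: dconv_def)

lemma dconv_mono:
  assumes "list_all2 atom_le xs xs'" and "list_all2 atom_le ys ys'"
  shows "list_all2 atom_le (dconv xs ys) (dconv xs' ys')"
  using assms(1)
proof (induction rule: list_all2_induct)
  case Nil
  then show ?case
    by (simp add: dconv_def)
next
  case (Cons p xs q xs')
  have "list_all2 atom_le (map (\<lambda>(b, u). (fst p * b, snd p + u)) ys)
                          (map (\<lambda>(b, u). (fst q * b, snd q + u)) ys')"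
    using assms(2) atom_le_conv[OF Cons.hyps(1)]
    by (auto simp: list_all2_map1 list_all2_map2 split_beta elim!: list_all2_mono)
  with Cons.IH show ?case
    by (cases p; cases q) (simp add: dconv_Cons list_all2_appendI)
qed

lemma dconv_all_mono:
  assumes "list_all2 (list_all2 atom_le) ws vs"
  shows "list_all2 atom_le (dconv_all ws) (dconv_all vs)"
  using assms
proof (induction rule: list_all2_induct)
  case Nil
  then show ?case
    by (simp add: dconv_all_def atom_le_def)
next
  case (Cons w ws v vs)
  then show ?case
    by (simp add: dconv_all_def dconv_mono)
qed

lemma delta_fun_mono:
  assumes "list_all2 (list_all2 atom_le) ws vs"
  shows "delta_fun C ws \<epsilon> \<le> delta_fun C vs \<epsilon>"
proof -
  have "(\<Sum>(c, t)\<leftarrow>xs. c * hockey_stick \<epsilon> t) \<le> (\<Sum>(c, t)\<leftarrow>ys. c * hockey_stick \<epsilon> t)"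
    if "list_all2 atom_le xs ys" for xs ys
    using that
    by (induction rule: list_all2_induct) (auto intro!: add_mono dest: atom_le_weighted_hockey_stick)
  from this[OF dconv_all_mono[OF assms]] show ?thesis
    by (simp add: delta_fun_eq_sum_hockey_stick)
qed

lemma finite_grid: "finite (grid L n)"
proof -
  have "grid L n = (\<lambda>i. -L + real i * (2 * L / real n)) ` {..<n}"
    unfolding grid_def by auto
  then show ?thesis
    by simp
qed

lemma round_down_le:
  assumes "n > 0" and "-L \<le> s"
  shows "round_down L n s \<le> s"
proof -
  have "-L \<in> {x \<in> grid L n. x \<le> s}"
    using assms unfolding grid_def by force
  then show ?thesis
    using Max_in[of "{x \<in> grid L n. x \<le> s}"] finite_grid[of L n]
    unfolding round_down_def by fastforce
qed

lemma le_round_up: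
  assumes "n > 0" and "s \<le> L - 2 * L / real n"
  shows "s \<le> round_up L n s"
proof -
  have "L - 2 * L / real n = -L + real (n - 1) * (2 * L / real n)"
    using assms(1) by (simp add: of_nat_diff field_simps)
  then have "L - 2 * L / real n \<in> grid L n"
    using assms(1) unfolding grid_def by (intro CollectI exI[of _ "n - 1"]) simp
  with assms(2) have "L - 2 * L / real n \<in> {x \<in> grid L n. s \<le> x}"
    by simp
  then show ?thesis
    using Min_in[of "{x \<in> grid L n. s \<le> x}"] finite_grid[of L n]
    unfolding round_up_def by fastforce
qed

theorem lemma5:
  fixes L C \<epsilon> :: real and n :: nat and ws :: "dmeasure list"
  assumes "L > 0" and "n > 0"
    and "length ws \<ge> 1"
    and "\<forall>w \<in> set ws. \<forall>(a, s) \<in> set w. a \<ge> 0 \<and> -L \<le> s \<and> s \<le> L - 2 * L / real n"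
    and "0 \<le> C" and "C \<le> 1"
    and "\<epsilon> > 0"
  shows "delta_fun C (map (discretize_L L n) ws) \<epsilon> \<le> delta_fun C ws \<epsilon>
       \<and> delta_fun C ws \<epsilon> \<le> delta_fun C (map (discretize_R L n) ws) \<epsilon>"
proof
  have "list_all2 (list_all2 atom_le) (map (discretize_L L n) ws) ws"
    using assms(4) round_down_le[OF assms(2)]
    by (fastforce simp: list_all2_map1 list_all2_same discretize_L_def atom_le_def)
  then show "delta_fun C (map (discretize_L L n) ws) \<epsilon> \<le> delta_fun C ws \<epsilon>"
    by (rule delta_fun_mono)
next
  have "list_all2 (list_all2 atom_le) ws (map (discretize_R L n) ws)"
    using assms(4) le_round_up[OF assms(2)]
    by (fastforce simp: list_all2_map2 list_all2_same discretize_R_def atom_le_def)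
  then show "delta_fun C ws \<epsilon> \<le> delta_fun C (map (discretize_R L n) ws) \<epsilon>"
    by (rule delta_fun_mono)
qed

end
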